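(* Assume the standing setting of the context. Let $(\varepsilon_k)_k$ be a positive sequence with $\varepsilon_k\to0$ and let $x^*(\varepsilon_k)$ be the unique Nash equilibrium of NEP($\varepsilon_k$). Then every accumulation point of $(x^*(\varepsilon_k))_k$ is a Nash equilibrium of the nonsmooth NEP, and therefore of the multi-leader-follower game.
   Context: Standing setting: $N\ge1$, $x=(x_1,\dots,x_N)\in\mathbb{R}^n$, $x_\nu\in\mathbb{R}^{n_\nu}$, $x_{-\nu}$ = all components other than $x_\nu$. For each $\nu$: $Q_\nu$ symmetric positive definite, $c_\nu\in\mathbb{R}^{n_\nu}$, $X_\nu=\{x_\nu:g_\nu(x_\nu)\le0\}$ nonempty, convex, closed with $g_\nu$ convex and at least twice differentiable; $X=X_1\times\dots\times X_N$; $a\in\mathbb{R}^m$, $a\ge0$; $Q_y\in\mathbb{R}^{m\times m}$ positive definite diagonal; $B,L\in\mathbb{R}^{n\times m}$. For $\varepsilon>0$, $\tilde\phi_\varepsilon:\mathbb{R}\to\mathbb{R}$ is convex and at least twice differentiable (applied componentwise), and $\phi_\varepsilon(\alpha,\beta)=\alpha+\beta-\tilde\phi_\varepsilon(\alpha-\beta)$ is a smooth NCP function continuous in $\varepsilon$, where at $\varepsilon=0$ it is the nonsmooth NCP function, i.e. $\tilde\phi_0(t)=|t|$ and $(t,\varepsilon)\mapsto\tilde\phi_\varepsilon(t)$ is continuous on $\mathbb{R}\times[0,\infty)$ (example: $\tilde\phi_\varepsilon(t)=\sqrt{t^2+4\varepsilon^2}$). NEP($\varepsilon$), $\varepsilon>0$: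 player $\nu$ solves $\min_{x_\nu\in X_\nu}\theta^\varepsilon_\nu(x)=\tfrac12 x_\nu^\top Q_\nu x_\nu+c_\nu^\top x_\nu+\tfrac12\sum_i a_i[(L^\top+Q_y^{-1}B^\top)x+\tilde\phi_\varepsilon((L^\top-Q_y^{-1}B^\top)x)]_i$; it has a unique Nash equilibrium $x^*(\varepsilon)$. Nonsmooth NEP: player $\nu$ solves $\min_{x_\nu\in X_\nu}\theta_\nu(x)=\tfrac12 x_\nu^\top Q_\nu x_\nu+c_\nu^\top x_\nu+\sum_i a_i\max\{(Q_y^{-1}B^\top x)_i,(L^\top x)_i\}$. It is equivalent to the multi-leader-follower game in which, given $x$, the follower solves $\min_y\tfrac12 y^\top Q_y y-(B^\top x)^\top y$ s.t. $y\ge L^\top x$ (unique solution $y(x)=\max\{Q_y^{-1}B^\top x,L^\top x\}$) and leader $\nu$ minimizes $\tfrac12 x_\nu^\top Q_\nu x_\nu+c_\nu^\top x_\nu+a^\top y(x)$ over $X_\nu$. A Nash equilibrium is $x^*\in X$ such that each $x^*_\nu$ minimizes player $\nu$'s objective over $X_\nu$ with $x_{-\nu}=x^*_{-\nu}$. *)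

theory Defs
  imports "HOL-Analysis.Analysis"
begin

text \<open>
Coordinates of the leaders' joint vector x are indexed by a finite type 'n; the map
blk :: 'n => 'p assigns each coordinate to its player (players = finite type 'p).
\<close>

definition blk_upd :: "('n \<Rightarrow> 'p) \<Rightarrow> 'p \<Rightarrow> real^'n \<Rightarrow> real^'n \<Rightarrow> real^'n" where
  "blk_upd blk \<nu> x z = (\<chi> i. if blk i = \<nu> then z $ i else x $ i)"

text \<open>x_nu in X_nu, where X_nu = {x_nu. g_nu(x_nu) <= 0}; the components of g_nu
are g nu j, j :: 'c, each depending on x only through the block x_nu.\<close>
definition feas :: "('p \<Rightarrow> 'c::finite \<Rightarrow> real^'n \<Rightarrow> real) \<Rightarrow> 'p \<Rightarrow> real^'n \<Rightarrow> bool" where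
  "feas g \<nu> x \<longleftrightarrow> (\<forall>j. g \<nu> j x \<le> 0)"

definition is_NE :: "('n \<Rightarrow> 'p) \<Rightarrow> ('p \<Rightarrow> 'c::finite \<Rightarrow> real^'n \<Rightarrow> real)
    \<Rightarrow> ('p \<Rightarrow> real^'n \<Rightarrow> real) \<Rightarrow> real^'n \<Rightarrow> bool" where
  "is_NE blk g \<theta> x \<longleftrightarrow> (\<forall>\<nu>. feas g \<nu> x) \<and>
     (\<forall>\<nu> z. feas g \<nu> z \<longrightarrow> \<theta> \<nu> x \<le> \<theta> \<nu> (blk_upd blk \<nu> x z))"

definition own_cost :: "('n \<Rightarrow> 'p) \<Rightarrow> ('p \<Rightarrow> real^'n^'n) \<Rightarrow> real^'n \<Rightarrow> 'p \<Rightarrow> real^'n \<Rightarrow> real" where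
  "own_cost blk Q c \<nu> x =
     (1/2) * (\<Sum>i\<in>{i. blk i = \<nu>}. \<Sum>j\<in>{j. blk j = \<nu>}. x $ i * (Q \<nu> $ i $ j) * x $ j)
     + (\<Sum>i\<in>{i. blk i = \<nu>}. c $ i * x $ i)"

text \<open>Q_y^{-1} B^T x, with Q_y = diag(qy).\<close>
definition wvec :: "real^'m \<Rightarrow> real^'m^'n \<Rightarrow> real^'n \<Rightarrow> real^'m" where
  "wvec qy B x = (\<chi> i. (transpose B *v x) $ i / qy $ i)"

definition theta_eps :: "('n \<Rightarrow> 'p) \<Rightarrow> ('p \<Rightarrow> real^'n^'n) \<Rightarrow> real^'n \<Rightarrow> real^'m \<Rightarrow> real^'m
    \<Rightarrow> real^'m^'n \<Rightarrow> real^'m^'n \<Rightarrow> (real \<Rightarrow> real \<Rightarrow> real) \<Rightarrow> real \<Rightarrow> 'p \<Rightarrow> real^'n \<Rightarrow> real" where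
  "theta_eps blk Q c a qy B L phi \<epsilon> \<nu> x =
     own_cost blk Q c \<nu> x +
     (1/2) * (\<Sum>i\<in>UNIV. a $ i * ((transpose L *v x) $ i + wvec qy B x $ i
                                 + phi \<epsilon> ((transpose L *v x) $ i - wvec qy B x $ i)))"

definition theta_ns :: "('n \<Rightarrow> 'p) \<Rightarrow> ('p \<Rightarrow> real^'n^'n) \<Rightarrow> real^'n \<Rightarrow> real^'m \<Rightarrow> real^'m
    \<Rightarrow> real^'m^'n \<Rightarrow> real^'m^'n \<Rightarrow> 'p \<Rightarrow> real^'n \<Rightarrow> real" where
  "theta_ns blk Q c a qy B L \<nu> x =
     own_cost blk Q c \<nu> x +
     (\<Sum>i\<in>UNIV. a $ i * max (wvec qy B x $ i) ((transpose L *v x) $ i))"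

definition follower_obj :: "real^'m \<Rightarrow> real^'m^'n \<Rightarrow> real^'n \<Rightarrow> real^'m \<Rightarrow> real" where
  "follower_obj qy B x y = (1/2) * (\<Sum>i\<in>UNIV. qy $ i * (y $ i)\<^sup>2) - (transpose B *v x) \<bullet> y"

definition follower_feas :: "real^'m^'n \<Rightarrow> real^'n \<Rightarrow> real^'m \<Rightarrow> bool" where
  "follower_feas L x y \<longleftrightarrow> (\<forall>i. (transpose L *v x) $ i \<le> y $ i)"

definition follower_sol :: "real^'m \<Rightarrow> real^'m^'n \<Rightarrow> real^'m^'n \<Rightarrow> real^'n \<Rightarrow> real^'m" where
  "follower_sol qy B L x = (THE y. follower_feas L x y \<and>
       (\<forall>y'. follower_feas L x y' \<longrightarrow> follower_obj qy B x y \<le> follower_obj qy B x y'))"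

definition theta_mlf :: "('n \<Rightarrow> 'p) \<Rightarrow> ('p \<Rightarrow> real^'n^'n) \<Rightarrow> real^'n \<Rightarrow> real^'m \<Rightarrow> real^'m
    \<Rightarrow> real^'m^'n \<Rightarrow> real^'m^'n \<Rightarrow> 'p \<Rightarrow> real^'n \<Rightarrow> real" where
  "theta_mlf blk Q c a qy B L \<nu> x = own_cost blk Q c \<nu> x + a \<bullet> follower_sol qy B L x"

end

theory Submission
  imports Defs
begin

text \<open>
Since \<open>max w u = (u + w + \<bar>u - w\<bar>) / 2\<close>, the nonsmooth objective is the smoothed one at
\<open>\<epsilon> = 0\<close>, and the smoothed objectives depend jointly continuously on \<open>(\<epsilon>, x)\<close>. Nash
equilibria are stable under such continuous convergence of the objectives (the strategy
sets are closed), so limits of \<open>x\<^sup>*(\<epsilon>\<^sub>k)\<close> are equilibria of the nonsmooth game. Finally,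
the follower's problem is separable and strongly convex, with solution
\<open>max (Q\<^sub>y\<^sup>-\<^sup>1 B\<^sup>T x) (L\<^sup>T x)\<close>, so the leaders' objectives coincide with the nonsmooth ones.
\<close>

lemma own_cost_tendsto:
  fixes y :: "nat \<Rightarrow> real^'n::finite"
  assumes "y \<longlonglongrightarrow> x"
  shows "(\<lambda>k. own_cost blk Q c \<nu> (y k)) \<longlonglongrightarrow> own_cost blk Q c \<nu> x"
  unfolding own_cost_def by (intro tendsto_intros assms)

lemma transpose_mult_nth_tendsto:
  fixes y :: "nat \<Rightarrow> real^'n::finite" and L :: "real^'m::finite^'n"
  assumes "y \<longlonglongrightarrow> x"
  shows "(\<lambda>k. (transpose L *v y k) $ i) \<longlonglongrightarrow> (transpose L *v x) $ i"
  unfolding matrix_vector_mult_def by (simp only: vec_lambda_beta) (intro tendsto_intros assms)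

lemma wvec_nth_tendsto:
  fixes y :: "nat \<Rightarrow> real^'n::finite" and B :: "real^'m::finite^'n"
  assumes "y \<longlonglongrightarrow> x"
  shows "(\<lambda>k. wvec qy B (y k) $ i) \<longlonglongrightarrow> wvec qy B x $ i"
  unfolding wvec_def by (simp only: vec_lambda_beta divide_inverse)
    (intro tendsto_mult_right transpose_mult_nth_tendsto assms)

lemma blk_upd_tendsto:
  assumes "y \<longlonglongrightarrow> x"
  shows "(\<lambda>k. blk_upd blk \<nu> (y k) z) \<longlonglongrightarrow> blk_upd blk \<nu> x z"
  unfolding blk_upd_def by (intro vec_tendstoI) (auto intro: tendsto_vec_nth assms)

lemma theta_eps_tendsto:
  fixes y :: "nat \<Rightarrow> real^'n::finite" and B L :: "real^'m::finite^'n"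
  assumes phi_cont: "continuous_on (UNIV \<times> {0..}) (\<lambda>(t, \<epsilon>). phi \<epsilon> t)"
    and "y \<longlonglongrightarrow> x" and "e \<longlonglongrightarrow> e0" and "\<And>k. e k \<ge> 0" and "e0 \<ge> 0"
  shows "(\<lambda>k. theta_eps blk Q c a qy B L phi (e k) \<nu> (y k))
           \<longlonglongrightarrow> theta_eps blk Q c a qy B L phi e0 \<nu> x"
proof -
  have phi_tendsto: "(\<lambda>k. phi (e k) (u k)) \<longlonglongrightarrow> phi e0 v" if "u \<longlonglongrightarrow> v" for u v
    using continuous_on_tendsto_compose[OF phi_cont tendsto_Pair[OF that \<open>e \<longlonglongrightarrow> e0\<close>]] assms(4,5)
    by simp
  show ?thesis
    unfolding theta_eps_def
    by (intro tendsto_intros own_cost_tendsto transpose_mult_nth_tendsto wvec_nth_tendsto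
        phi_tendsto \<open>y \<longlonglongrightarrow> x\<close>)
qed

lemma theta_eps_zero:
  assumes "\<And>t. phi 0 t = \<bar>t\<bar>"
  shows "theta_eps blk Q c a qy B L phi 0 = theta_ns blk Q c a qy B L"
proof -
  have smoothed_term: "(1/2) * (a' * (u + w + \<bar>u - w\<bar>)) = a' * max w u" for a' u w :: real
    by (simp add: max_def abs_if field_simps)
  show ?thesis
    unfolding theta_eps_def theta_ns_def fun_eq_iff assms sum_distrib_left smoothed_term
    by simp
qed

lemma is_NE_limit:
  assumes g_cont: "\<And>\<nu> j. continuous_on UNIV (g \<nu> j)"
    and NE: "\<And>k. is_NE blk g (\<theta>s k) (y k)"
    and "y \<longlonglongrightarrow> x"
    and \<theta>_lim: "\<And>\<nu> w v. w \<longlonglongrightarrow> v \<Longrightarrow> (\<lambda>k. \<theta>s k \<nu> (w k)) \<longlonglongrightarrow> \<theta> \<nu> v"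
  shows "is_NE blk g \<theta> x"
  unfolding is_NE_def
proof (intro conjI allI impI)
  fix \<nu>
  show "feas g \<nu> x"
    unfolding feas_def
  proof
    fix j
    have "(\<lambda>k. g \<nu> j (y k)) \<longlonglongrightarrow> g \<nu> j x"
      by (rule continuous_on_tendsto_compose[OF g_cont \<open>y \<longlonglongrightarrow> x\<close>]) auto
    moreover have "\<forall>k. g \<nu> j (y k) \<le> 0"
      using NE unfolding is_NE_def feas_def by blast
    ultimately show "g \<nu> j x \<le> 0"
      by (meson LIMSEQ_le_const2)
  qed
next
  fix \<nu> z
  assume "feas g \<nu> z"
  then have "\<forall>k. \<theta>s k \<nu> (y k) \<le> \<theta>s k \<nu> (blk_upd blk \<nu> (y k) z)"
    using NE unfolding is_NE_def by blast
  then show "\<theta> \<nu> x \<le> \<theta> \<nu> (blk_upd blk \<nu> x z)"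
    by (intro LIMSEQ_le[OF \<theta>_lim[OF \<open>y \<longlonglongrightarrow> x\<close>] \<theta>_lim[OF blk_upd_tendsto[OF \<open>y \<longlonglongrightarrow> x\<close>]]])
      blast
qed

text \<open>With \<open>w = Q\<^sub>y\<^sup>-\<^sup>1 B\<^sup>T x\<close> the unconstrained minimiser and \<open>y\<^sub>0 = max w (L\<^sup>T x)\<close>, every
  feasible \<open>y\<close> satisfies \<open>(y - y\<^sub>0) (y\<^sub>0 - w) \<ge> 0\<close> coordinatewise (first-order optimality
  of \<open>y\<^sub>0\<close>); the quadratic term then contributes the strong-convexity margin.\<close>

lemma follower_obj_growth:
  fixes B L :: "real^'m::finite^'n::finite"
  assumes qy_pos: "\<And>i. qy $ i > 0"
    and y0_def: "y0 = (\<chi> i. max (wvec qy B x $ i) ((transpose L *v x) $ i))"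
    and "follower_feas L x y"
  shows "follower_obj qy B x y0 + (\<Sum>i\<in>UNIV. qy $ i / 2 * (y $ i - y0 $ i)\<^sup>2)
           \<le> follower_obj qy B x y"
proof -
  have coordinate: "qy $ i / 2 * (y $ i - y0 $ i)\<^sup>2 \<le>
      ((1/2) * (qy $ i * (y $ i)\<^sup>2) - (transpose B *v x) $ i * y $ i)
      - ((1/2) * (qy $ i * (y0 $ i)\<^sup>2) - (transpose B *v x) $ i * y0 $ i)" for i
  proof -
    define w where "w = wvec qy B x $ i"
    have Bx: "(transpose B *v x) $ i = qy $ i * w"
      unfolding w_def wvec_def using qy_pos[of i] by simp
    have "(y $ i - y0 $ i) * (y0 $ i - w) \<ge> 0"
      using \<open>follower_feas L x y\<close> unfolding follower_feas_def y0_def w_def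
      by (auto simp: max_def)
    then have "qy $ i * ((y $ i - y0 $ i) * (y0 $ i - w)) \<ge> 0"
      using qy_pos[of i] by simp
    then show ?thesis
      unfolding Bx by (simp add: power2_eq_square algebra_simps)
  qed
  have "(\<Sum>i\<in>UNIV. qy $ i / 2 * (y $ i - y0 $ i)\<^sup>2)
      \<le> follower_obj qy B x y - follower_obj qy B x y0"
    unfolding follower_obj_def inner_vec_def sum_distrib_left
    using sum_mono[OF coordinate] by (simp add: sum_subtractf)
  then show ?thesis
    by simp
qed

lemma follower_sol_eq:
  fixes B L :: "real^'m::finite^'n::finite"
  assumes qy_pos: "\<And>i. qy $ i > 0"
  shows "follower_sol qy B L x = (\<chi> i. max (wvec qy B x $ i) ((transpose L *v x) $ i))"
    (is "_ = ?y0")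
proof -
  let ?margin = "\<lambda>y i. qy $ i / 2 * (y $ i - ?y0 $ i)\<^sup>2"
  have feas_y0: "follower_feas L x ?y0"
    unfolding follower_feas_def by simp
  have margin_nonneg: "0 \<le> ?margin y i" for y i
    using qy_pos[of i] by simp
  have y0_min: "follower_obj qy B x ?y0 \<le> follower_obj qy B x y" if "follower_feas L x y" for y
    using follower_obj_growth[where B = B, OF qy_pos refl that]
      sum_nonneg[of UNIV "?margin y", OF margin_nonneg]
    by linarith
  show ?thesis
    unfolding follower_sol_def
  proof (rule the_equality)
    show "follower_feas L x ?y0 \<and>
        (\<forall>y'. follower_feas L x y' \<longrightarrow> follower_obj qy B x ?y0 \<le> follower_obj qy B x y')"
      using feas_y0 y0_min by blast
  next
    fix y
    assume "follower_feas L x y \<and>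
        (\<forall>y'. follower_feas L x y' \<longrightarrow> follower_obj qy B x y \<le> follower_obj qy B x y')"
    then have "follower_obj qy B x y \<le> follower_obj qy B x ?y0"
      and "follower_obj qy B x ?y0 + sum (?margin y) UNIV \<le> follower_obj qy B x y"
      using feas_y0 follower_obj_growth[where B = B, OF qy_pos refl] by blast+
    then have "sum (?margin y) UNIV \<le> 0"
      by linarith
    then have "sum (?margin y) UNIV = 0"
      using sum_nonneg[of UNIV "?margin y", OF margin_nonneg] by linarith
    then have margin_zero: "?margin y i = 0" for i
      using sum_nonneg_eq_0_iff[of UNIV "?margin y"] margin_nonneg by simp
    have "y $ i = ?y0 $ i" for i
      using margin_zero[of i] qy_pos[of i] by simp
    then show "y = ?y0"
      by (simp add: vec_eq_iff)
  qed
qed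

lemma theta_mlf_eq_theta_ns:
  assumes "\<And>i. qy $ i > 0"
  shows "theta_mlf blk Q c a qy B L = theta_ns blk Q c a qy B L"
  unfolding theta_mlf_def theta_ns_def fun_eq_iff follower_sol_eq[OF assms] inner_vec_def
  by simp

theorem mainTheorem8:
  fixes blk :: "'n::finite \<Rightarrow> 'p::finite"
    and Q :: "'p \<Rightarrow> real^'n^'n" and c :: "real^'n"
    and g :: "'p \<Rightarrow> 'c::finite \<Rightarrow> real^'n \<Rightarrow> real"
    and a qy :: "real^'m::finite" and B L :: "real^'m^'n"
    and phi :: "real \<Rightarrow> real \<Rightarrow> real"
    and eps :: "nat \<Rightarrow> real" and xs :: "nat \<Rightarrow> real^'n" and xbar :: "real^'n"
  assumes blocks_nonempty: "surj blk"
    and Q_sym: "\<And>\<nu> i j. blk i = \<nu> \<Longrightarrow> blk j = \<nu> \<Longrightarrow> Q \<nu> $ i $ j = Q \<nu> $ j $ i"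
    and Q_pd: "\<And>\<nu> v. (\<exists>i. blk i = \<nu> \<and> v $ i \<noteq> 0) \<Longrightarrow>
        (\<Sum>i\<in>{i. blk i = \<nu>}. \<Sum>j\<in>{j. blk j = \<nu>}. v $ i * (Q \<nu> $ i $ j) * v $ j) > 0"
    and g_local: "\<And>\<nu> j x y. (\<forall>i. blk i = \<nu> \<longrightarrow> x $ i = y $ i) \<Longrightarrow> g \<nu> j x = g \<nu> j y"
    and g_convex: "\<And>\<nu> j. convex_on UNIV (g \<nu> j)"
    and g_C2: "\<And>\<nu> j. \<exists>G. \<forall>x. (g \<nu> j has_derivative (\<lambda>h. G x \<bullet> h)) (at x) \<and> G differentiable (at x)"
    and X_nonempty: "\<And>\<nu>. \<exists>x. feas g \<nu> x"
    and a_nonneg: "\<And>i. a $ i \<ge> 0"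
    and qy_pos: "\<And>i. qy $ i > 0"
    and phi_convex: "\<And>\<epsilon>. \<epsilon> > 0 \<Longrightarrow> convex_on UNIV (phi \<epsilon>)"
    and phi_C2: "\<And>\<epsilon>. \<epsilon> > 0 \<Longrightarrow> \<exists>d. \<forall>t. (phi \<epsilon> has_real_derivative d t) (at t) \<and> d differentiable (at t)"
    and phi_zero: "\<And>t. phi 0 t = \<bar>t\<bar>"
    and phi_cont: "continuous_on (UNIV \<times> {0..}) (\<lambda>(t, \<epsilon>). phi \<epsilon> t)"
    and eps_pos: "\<And>k. eps k > 0"
    and eps_lim: "eps \<longlonglongrightarrow> 0"
    and xs_NE: "\<And>k. is_NE blk g (theta_eps blk Q c a qy B L phi (eps k)) (xs k)"
    and accum: "\<exists>r. strict_mono r \<and> (xs \<circ> r) \<longlonglongrightarrow> xbar"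
  shows "is_NE blk g (theta_ns blk Q c a qy B L) xbar \<and>
         is_NE blk g (theta_mlf blk Q c a qy B L) xbar"
proof -
  obtain r where "strict_mono r" and xs_r: "(xs \<circ> r) \<longlonglongrightarrow> xbar"
    using accum by blast
  have eps_r: "(eps \<circ> r) \<longlonglongrightarrow> 0"
    using LIMSEQ_subseq_LIMSEQ[OF eps_lim \<open>strict_mono r\<close>] .
  have g_cont: "continuous_on UNIV (g \<nu> j)" for \<nu> j
    using g_C2[of \<nu> j] has_derivative_continuous continuous_at_imp_continuous_on by metis
  have "is_NE blk g (theta_eps blk Q c a qy B L phi 0) xbar"
  proof (rule is_NE_limit[OF g_cont _ xs_r])
    show "is_NE blk g (theta_eps blk Q c a qy B L phi ((eps \<circ> r) k)) ((xs \<circ> r) k)" for k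
      using xs_NE by simp
    show "(\<lambda>k. theta_eps blk Q c a qy B L phi ((eps \<circ> r) k) \<nu> (w k))
        \<longlonglongrightarrow> theta_eps blk Q c a qy B L phi 0 \<nu> v" if "w \<longlonglongrightarrow> v" for \<nu> w v
      using theta_eps_tendsto[OF phi_cont that eps_r _ order_refl] eps_pos by (simp add: less_imp_le)
  qed
  then show ?thesis
    unfolding theta_eps_zero[where phi = phi, OF phi_zero] theta_mlf_eq_theta_ns[OF qy_pos] by simp
qed

end
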